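(* Let $G$ be a cyclically $4$-edge-connected cubic graph and $e$ an edge of $G$ contained in some cyclic $4$-edge-cut of $G$. Then there exist vertex sets $A_1\subseteq A_2\subseteq\cdots\subseteq A_k$, with $B_i=V(G)\setminus A_i$, such that every cyclic $4$-edge-cut of $G$ containing $e$ equals $E(A_i,B_i)$ for some $i\in\{1,\dots,k\}$.
   Context: Graphs may have parallel edges. For a partition $\{A,B\}$ of $V(G)$, $E(A,B)$ is the set of edges between $A$ and $B$; it is a $4$-edge-cut if it has exactly four edges, and cyclic if both $G[A]$ and $G[B]$ contain a cycle. $G$ is cyclically $4$-edge-connected if it has no cyclic edge-cut with fewer than four edges. *)

theory Defs
  imports Main
begin

text \<open>A finite loopless multigraph: vertex set V, edge set E (edges are abstract
  objects, so parallel edges are allowed), and each edge has a set of exactly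
  two distinct endpoints in V.\<close>
definition multigraph :: "'v set \<Rightarrow> 'e set \<Rightarrow> ('e \<Rightarrow> 'v set) \<Rightarrow> bool" where
  "multigraph V E ends \<longleftrightarrow> finite V \<and> finite E \<and>
     (\<forall>e\<in>E. ends e \<subseteq> V \<and> card (ends e) = 2)"

definition degree :: "'e set \<Rightarrow> ('e \<Rightarrow> 'v set) \<Rightarrow> 'v \<Rightarrow> nat" where
  "degree E ends v = card {e\<in>E. v \<in> ends e}"

definition cubic :: "'v set \<Rightarrow> 'e set \<Rightarrow> ('e \<Rightarrow> 'v set) \<Rightarrow> bool" where
  "cubic V E ends \<longleftrightarrow> multigraph V E ends \<and> (\<forall>v\<in>V. degree E ends v = 3)"

text \<open>The induced subgraph G[A] contains a cycle: distinct vertices v_0..v_{n-1} in A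
  and distinct edges e_0..e_{n-1}, n >= 2, where e_i joins v_i and v_{i+1 mod n}
  (n = 2 corresponds to a pair of parallel edges).\<close>
definition has_cycle_in :: "'e set \<Rightarrow> ('e \<Rightarrow> 'v set) \<Rightarrow> 'v set \<Rightarrow> bool" where
  "has_cycle_in E ends A \<longleftrightarrow>
     (\<exists>vs es. length vs \<ge> 2 \<and> length es = length vs \<and> distinct vs \<and> distinct es \<and>
        set vs \<subseteq> A \<and> set es \<subseteq> E \<and>
        (\<forall>i<length vs. ends (es ! i) = {vs ! i, vs ! ((i + 1) mod length vs)}))"

definition edge_cut :: "'e set \<Rightarrow> ('e \<Rightarrow> 'v set) \<Rightarrow> 'v set \<Rightarrow> 'v set \<Rightarrow> 'e set" where
  "edge_cut E ends A B = {e\<in>E. ends e \<inter> A \<noteq> {} \<and> ends e \<inter> B \<noteq> {}}"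

definition cyclic_partition :: "'v set \<Rightarrow> 'e set \<Rightarrow> ('e \<Rightarrow> 'v set) \<Rightarrow> 'v set \<Rightarrow> 'v set \<Rightarrow> bool" where
  "cyclic_partition V E ends A B \<longleftrightarrow>
     A \<union> B = V \<and> A \<inter> B = {} \<and> A \<noteq> {} \<and> B \<noteq> {} \<and>
     has_cycle_in E ends A \<and> has_cycle_in E ends B"

definition cyclic_k_edge_cut :: "nat \<Rightarrow> 'v set \<Rightarrow> 'e set \<Rightarrow> ('e \<Rightarrow> 'v set) \<Rightarrow> 'e set \<Rightarrow> bool" where
  "cyclic_k_edge_cut k V E ends F \<longleftrightarrow>
     (\<exists>A B. cyclic_partition V E ends A B \<and> F = edge_cut E ends A B \<and> card F = k)"

definition cyclically_4_edge_connected :: "'v set \<Rightarrow> 'e set \<Rightarrow> ('e \<Rightarrow> 'v set) \<Rightarrow> bool" where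
  "cyclically_4_edge_connected V E ends \<longleftrightarrow>
     (\<forall>A B. cyclic_partition V E ends A B \<longrightarrow> card (edge_cut E ends A B) \<ge> 4)"

end

theory Submission
  imports Defs
begin

text \<open>
  Fix the edge e = uv.  Every cyclic 4-edge-cut through e is E(A, V - A) for
  its side A containing u.  The key fact is that any two such sides A and C are nested:
  if they crossed, posimodularity of the cut size (strengthened by the edge e, which
  is counted on the right only) together with cyclic 4-edge-connectivity forces A - C
  and C - A to be single vertices; submodularity then forces |E(A \<inter> C)| = 4, which
  contradicts the parity of cut sizes in a cubic graph, as |A| = |A \<inter> C| + 1.
  Hence these sides form a finite chain, and listing it increasingly gives A_1 ... A_k.
\<close>

locale fin_multigraph =
  fixes V :: "'v set" and E :: "'e set" and ends :: "'e \<Rightarrow> 'v set"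
  assumes graph: "multigraph V E ends"
begin

lemma finite_V: "finite V" and finite_E: "finite E"
  using graph by (auto simp: multigraph_def)

lemma ends_subset: "f \<in> E \<Longrightarrow> ends f \<subseteq> V"
  using graph by (auto simp: multigraph_def)

lemma edge_endpoints:
  assumes "f \<in> E"
  obtains p q where "p \<noteq> q" "p \<in> V" "q \<in> V" "ends f = {p, q}"
proof -
  have "card (ends f) = 2" using graph assms by (auto simp: multigraph_def)
  then show thesis using that ends_subset[OF assms] by (auto simp: card_2_iff)
qed

definition boundary :: "'v set \<Rightarrow> 'e set" where
  "boundary X = edge_cut E ends X (V - X)"

lemma boundary_iff:
  "f \<in> boundary X \<longleftrightarrow> f \<in> E \<and> ends f \<inter> X \<noteq> {} \<and> ends f \<inter> (V - X) \<noteq> {}"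
  by (simp add: boundary_def edge_cut_def)

lemma boundary_complement: "X \<subseteq> V \<Longrightarrow> boundary (V - X) = boundary X"
  by (auto simp: boundary_iff double_diff)

text \<open>Edge counts as sums of indicators over E; all counting identities below are
  proved edge by edge in this form.\<close>
lemma card_filter_E: "card {f\<in>E. P f} = (\<Sum>f\<in>E. of_bool (P f))"
proof -
  have "{f\<in>E. P f} = E \<inter> {f. P f}" by blast
  then show ?thesis using finite_E by simp
qed

lemma card_boundary_sum: "card (boundary X) = (\<Sum>f\<in>E. of_bool (f \<in> boundary X))"
proof -
  have "boundary X = {f\<in>E. f \<in> boundary X}" by (auto simp: boundary_iff)
  then show ?thesis using card_filter_E[of "\<lambda>f. f \<in> boundary X"] by simp
qed

lemma card_boundary_insert:
  assumes "a \<subseteq> V" "w \<in> V" "w \<notin> a"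
  shows "card (boundary (insert w a)) + 2 * card {f\<in>E. w \<in> ends f \<and> ends f \<inter> a \<noteq> {}}
         = card (boundary a) + degree E ends w"
proof -
  have edgewise: "of_bool (f \<in> boundary (insert w a)) + 2 * of_bool (w \<in> ends f \<and> ends f \<inter> a \<noteq> {})
        = of_bool (f \<in> boundary a) + (of_bool (w \<in> ends f) :: nat)" if "f \<in> E" for f
  proof -
    obtain p q where "p \<noteq> q" "p \<in> V" "q \<in> V" "ends f = {p, q}"
      using edge_endpoints[OF \<open>f \<in> E\<close>] .
    then show ?thesis using \<open>f \<in> E\<close> assms
      by (cases "p \<in> a"; cases "q \<in> a"; cases "p = w"; cases "q = w"; auto simp: boundary_iff)
  qed
  have "card (boundary (insert w a)) + 2 * card {f\<in>E. w \<in> ends f \<and> ends f \<inter> a \<noteq> {}}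
      = (\<Sum>f\<in>E. of_bool (f \<in> boundary (insert w a)) + 2 * of_bool (w \<in> ends f \<and> ends f \<inter> a \<noteq> {}))"
    by (simp add: card_boundary_sum card_filter_E sum.distrib sum_distrib_left)
  also have "\<dots> = (\<Sum>f\<in>E. of_bool (f \<in> boundary a) + (of_bool (w \<in> ends f) :: nat))"
    using edgewise by (rule sum.cong[OF refl])
  also have "\<dots> = card (boundary a) + degree E ends w"
    by (simp add: card_boundary_sum card_filter_E degree_def sum.distrib)
  finally show ?thesis .
qed

lemma card_boundary_singleton:
  assumes "w \<in> V"
  shows "card (boundary {w}) = degree E ends w"
proof -
  have "boundary {} = {}" by (auto simp: boundary_iff)
  then show ?thesis using assms card_boundary_insert[of "{}" w] by simp
qed

lemma boundary_submodular:
  "card (boundary (X \<inter> Y)) + card (boundary (X \<union> Y)) \<le> card (boundary X) + card (boundary Y)"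
proof -
  have edgewise: "of_bool (f \<in> boundary (X \<inter> Y)) + of_bool (f \<in> boundary (X \<union> Y))
        \<le> of_bool (f \<in> boundary X) + (of_bool (f \<in> boundary Y) :: nat)" if "f \<in> E" for f
  proof -
    obtain p q where "p \<noteq> q" "p \<in> V" "q \<in> V" "ends f = {p, q}"
      using edge_endpoints[OF \<open>f \<in> E\<close>] .
    then show ?thesis using \<open>f \<in> E\<close>
      by (cases "p \<in> X"; cases "q \<in> X"; cases "p \<in> Y"; cases "q \<in> Y"; auto simp: boundary_iff)
  qed
  have "card (boundary (X \<inter> Y)) + card (boundary (X \<union> Y))
      = (\<Sum>f\<in>E. of_bool (f \<in> boundary (X \<inter> Y)) + of_bool (f \<in> boundary (X \<union> Y)))"
    by (simp add: card_boundary_sum sum.distrib)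
  also have "\<dots> \<le> (\<Sum>f\<in>E. of_bool (f \<in> boundary X) + (of_bool (f \<in> boundary Y) :: nat))"
    using edgewise by (rule sum_mono)
  also have "\<dots> = card (boundary X) + card (boundary Y)"
    by (simp add: card_boundary_sum sum.distrib)
  finally show ?thesis .
qed

text \<open>Posimodularity of the boundary size, strengthened by the edge e, which lies in the
  boundaries of X and of Y but in neither boundary on the left.\<close>
lemma boundary_posimodular:
  assumes "e \<in> E" "ends e = {u, v}" "u \<in> X" "u \<in> Y" "v \<notin> X" "v \<notin> Y"
  shows "card (boundary (X - Y)) + card (boundary (Y - X)) + 2 \<le> card (boundary X) + card (boundary Y)"
proof -
  have edgewise: "of_bool (f \<in> boundary (X - Y)) + of_bool (f \<in> boundary (Y - X)) + 2 * of_bool (f = e)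
        \<le> of_bool (f \<in> boundary X) + (of_bool (f \<in> boundary Y) :: nat)" if "f \<in> E" for f
  proof -
    obtain p q where "p \<noteq> q" "p \<in> V" "q \<in> V" "ends f = {p, q}"
      using edge_endpoints[OF \<open>f \<in> E\<close>] .
    then show ?thesis using \<open>f \<in> E\<close> assms
      by (cases "p \<in> X"; cases "q \<in> X"; cases "p \<in> Y"; cases "q \<in> Y"; auto simp: boundary_iff)
  qed
  have "card (boundary (X - Y)) + card (boundary (Y - X)) + 2
      = (\<Sum>f\<in>E. of_bool (f \<in> boundary (X - Y)) + of_bool (f \<in> boundary (Y - X)) + 2 * of_bool (f = e))"
    using assms(1) finite_E by (simp add: card_boundary_sum sum.distrib sum_distrib_left)
  also have "\<dots> \<le> (\<Sum>f\<in>E. of_bool (f \<in> boundary X) + (of_bool (f \<in> boundary Y) :: nat))"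
    using edgewise by (rule sum_mono)
  also have "\<dots> = card (boundary X) + card (boundary Y)"
    by (simp add: card_boundary_sum sum.distrib)
  finally show ?thesis .
qed

definition path_in :: "'v set \<Rightarrow> 'v list \<Rightarrow> 'e list \<Rightarrow> bool" where
  "path_in X vs es \<longleftrightarrow> vs \<noteq> [] \<and> length es = length vs - 1 \<and> distinct vs \<and> distinct es \<and>
     set vs \<subseteq> X \<and> set es \<subseteq> E \<and> (\<forall>i < length es. ends (es ! i) = {vs ! i, vs ! Suc i})"

definition two_inner_edges :: "'v set \<Rightarrow> 'v \<Rightarrow> bool" where
  "two_inner_edges X w \<longleftrightarrow> (\<exists>f1 f2. f1 \<noteq> f2 \<and> f1 \<in> E \<and> f2 \<in> E \<and>
     w \<in> ends f1 \<and> w \<in> ends f2 \<and> ends f1 \<subseteq> X \<and> ends f2 \<subseteq> X)"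

text \<open>If the end of a path has two inner edges, one of them is not yet used by the path:
  the only path edge at the end vertex is the last one.\<close>
lemma path_fresh_edge:
  assumes P: "path_in X vs es" and two: "two_inner_edges X (last vs)"
  obtains g where "g \<in> E" "last vs \<in> ends g" "ends g \<subseteq> X" "g \<notin> set es"
proof -
  define m where "m = length es"
  have lvs: "length vs = Suc m" and z: "last vs = vs ! m"
    using P by (auto simp: path_in_def m_def last_conv_nth)
  obtain g where g: "g \<in> E" "last vs \<in> ends g" "ends g \<subseteq> X" "m > 0 \<Longrightarrow> g \<noteq> es ! (m - 1)"
    using two unfolding two_inner_edges_def by metis
  have "g \<notin> set es"
  proof
    assume "g \<in> set es"
    then obtain i where i: "i < m" "es ! i = g" by (auto simp: in_set_conv_nth m_def)
    then have "vs ! m \<in> {vs ! i, vs ! Suc i}" using P g(2) z by (auto simp: path_in_def m_def)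
    then have "m = i \<or> m = Suc i" using P lvs i by (auto simp: path_in_def nth_eq_iff_index_eq)
    then show False using g(4) i by auto
  qed
  then show thesis using that g by blast
qed

lemma path_snoc:
  assumes P: "path_in X vs es" and "y \<in> X" "y \<notin> set vs" "g \<in> E" "g \<notin> set es"
    and g: "ends g = {last vs, y}"
  shows "path_in X (vs @ [y]) (es @ [g])"
proof -
  have lvs: "length vs = Suc (length es)" and z: "last vs = vs ! length es"
    using P by (auto simp: path_in_def last_conv_nth)
  have "ends ((es @ [g]) ! i) = {(vs @ [y]) ! i, (vs @ [y]) ! Suc i}" if "i < Suc (length es)" for i
  proof (cases "i < length es")
    case True
    then show ?thesis using P lvs by (auto simp: path_in_def nth_append)
  next
    case False
    then have "i = length es" using that by simp
    then show ?thesis using lvs g z by (simp add: nth_append)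
  qed
  then show ?thesis using P assms by (auto simp: path_in_def)
qed

lemma path_close_cycle:
  assumes P: "path_in X vs es" and j: "j < length es" and "g \<in> E" "g \<notin> set es"
    and g: "ends g = {last vs, vs ! j}"
  shows "has_cycle_in E ends X"
proof -
  define m where "m = length es"
  have lvs: "length vs = Suc m" and z: "last vs = vs ! m"
    using P by (auto simp: path_in_def last_conv_nth m_def)
  define cvs where "cvs = drop j vs"
  define ces where "ces = drop j es @ [g]"
  have len: "length cvs = Suc m - j" "length ces = Suc m - j"
    using lvs j by (auto simp: cvs_def ces_def m_def)
  have closing: "ends (ces ! i) = {cvs ! i, cvs ! ((i + 1) mod length cvs)}" if i: "i < length cvs" for i
  proof (cases "i < m - j")
    case True
    then have "(i + 1) mod length cvs = Suc i" "ces ! i = es ! (j + i)" "j + i < m"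
      using len j by (simp_all add: ces_def nth_append m_def)
    then show ?thesis using P lvs j by (simp add: cvs_def path_in_def m_def)
  next
    case False
    then have "i = m - j" using i len by simp
    then have "(i + 1) mod length cvs = 0" "ces ! i = g" "cvs ! i = last vs" "cvs ! 0 = vs ! j"
      using len j lvs z by (simp_all add: ces_def cvs_def nth_append m_def)
    then show ?thesis using g by auto
  qed
  show ?thesis unfolding has_cycle_in_def
    using P assms len closing
    by (intro exI[of _ cvs] exI[of _ ces])
       (auto simp: cvs_def ces_def path_in_def m_def dest: in_set_dropD)
qed

text \<open>Every nonempty finite X in which each vertex has two inner edges contains a cycle:
  extend a path greedily; since X is finite, the path must eventually close up.\<close>
lemma two_inner_edges_has_cycle:
  assumes "finite X" "X \<noteq> {}" "\<forall>w\<in>X. two_inner_edges X w"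
  shows "has_cycle_in E ends X"
proof -
  have "has_cycle_in E ends X" if "path_in X vs es" for vs es
    using that
  proof (induction "card X - length vs" arbitrary: vs es rule: less_induct)
    case less
    have "last vs \<in> X" using less.prems by (auto simp: path_in_def)
    then obtain g where g: "g \<in> E" "last vs \<in> ends g" "ends g \<subseteq> X" "g \<notin> set es"
      using path_fresh_edge[OF less.prems] assms(3) by blast
    obtain y where y: "ends g = {last vs, y}" "y \<noteq> last vs"
    proof -
      obtain p q where "p \<noteq> q" "ends g = {p, q}" using edge_endpoints[OF g(1)] by blast
      then show thesis using that[of "if p = last vs then q else p"] g(2) by (auto simp: insert_commute)
    qed
    have "y \<in> X" using y(1) g(3) by auto
    show ?case
    proof (cases "y \<in> set vs")
      case False
      have "set vs \<subset> X" using less.prems False \<open>y \<in> X\<close> by (auto simp: path_in_def)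
      then have "card (set vs) < card X" using assms(1) by (simp add: psubset_card_mono)
      then have "card X - length (vs @ [y]) < card X - length vs"
        using less.prems by (simp add: path_in_def distinct_card)
      then show ?thesis
        by (rule less.hyps[OF _ path_snoc[OF less.prems \<open>y \<in> X\<close> False g(1,4) y(1)]])
    next
      case True
      then obtain j where j: "j < length vs" "y = vs ! j" by (auto simp: in_set_conv_nth)
      have "length vs = Suc (length es)" "last vs = vs ! length es"
        using less.prems by (auto simp: path_in_def last_conv_nth)
      then have "j < length es" using j y(2) by (metis less_SucE)
      then show ?thesis using path_close_cycle[OF less.prems _ g(1,4)] y(1) j(2) by blast
    qed
  qed
  moreover obtain x where "x \<in> X" using assms(2) by blast
  then have "path_in X [x] []" by (simp add: path_in_def)
  ultimately show ?thesis by blast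
qed

lemma cyclic_4_cut_side:
  assumes F: "cyclic_k_edge_cut 4 V E ends F" "e \<in> F" and e: "ends e = {u, v}"
  shows "\<exists>A. u \<in> A \<and> v \<notin> A \<and> cyclic_partition V E ends A (V - A) \<and>
             card (boundary A) = 4 \<and> F = boundary A"
proof -
  obtain A B where AB: "cyclic_partition V E ends A B" "F = edge_cut E ends A B" "card F = 4"
    using F(1) by (auto simp: cyclic_k_edge_cut_def)
  have B: "B = V - A" and A: "A = V - B" and disj: "A \<inter> B = {}"
    using AB(1) by (auto simp: cyclic_partition_def)
  have BA: "cyclic_partition V E ends B A" using AB(1) by (auto simp: cyclic_partition_def)
  have "edge_cut E ends A B = edge_cut E ends B A" by (auto simp: edge_cut_def)
  then have FA: "F = boundary A" and FB: "F = boundary B"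
    using AB(2) unfolding boundary_def by (simp_all only: flip: A B)
  have "ends e \<inter> A \<noteq> {}" "ends e \<inter> B \<noteq> {}" using F(2) AB(2) by (simp_all add: edge_cut_def)
  then have "u \<in> A \<or> v \<in> A" "u \<in> B \<or> v \<in> B" using e by auto
  then have "u \<in> A \<and> v \<notin> A \<or> u \<in> B \<and> v \<notin> B" using disj by blast
  then show ?thesis
  proof
    assume "u \<in> A \<and> v \<notin> A"
    then show ?thesis using AB(1,3) FA B by (intro exI[of _ A]) simp
  next
    assume "u \<in> B \<and> v \<notin> B"
    then show ?thesis using BA AB(3) FB A by (intro exI[of _ B]) simp
  qed
qed

end

locale cubic_graph = fin_multigraph +
  assumes degree_3: "w \<in> V \<Longrightarrow> degree E ends w = 3"
begin

lemma card_boundary_singleton_3: "w \<in> V \<Longrightarrow> card (boundary {w}) = 3"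
  using card_boundary_singleton degree_3 by simp

lemma boundary_parity:
  assumes "X \<subseteq> V"
  shows "even (card (boundary X) + card X)"
proof -
  have "finite X" using assms finite_V finite_subset by blast
  then show ?thesis using assms
  proof (induction X rule: finite_induct)
    case empty
    have "boundary {} = {}" by (auto simp: boundary_iff)
    then show ?case by simp
  next
    case (insert w a)
    define k where "k = card {f\<in>E. w \<in> ends f \<and> ends f \<inter> a \<noteq> {}}"
    have eq: "card (boundary (insert w a)) + card (insert w a) + 2 * k = (card (boundary a) + card a) + 4"
      using card_boundary_insert[of a w] degree_3 insert by (simp add: k_def)
    have "even ((card (boundary a) + card a) + 4)" using insert by simp
    then have "even (card (boundary (insert w a)) + card (insert w a) + 2 * k)" by (simp only: eq)
    then show ?case by simp
  qed
qed

text \<open>Remove a vertex with at most one edge into the rest; this lowers the boundary size,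
  and the process cannot end at a single vertex, whose boundary has size three.\<close>
lemma small_boundary_has_cycle:
  assumes "X \<subseteq> V" "card X \<ge> 2" "card (boundary X) \<le> 3"
  shows "has_cycle_in E ends X"
  using assms
proof (induction "card X" arbitrary: X rule: less_induct)
  case less
  have finX: "finite X" using less.prems finite_V finite_subset by blast
  show ?case
  proof (cases "\<forall>w\<in>X. two_inner_edges X w")
    case True
    then show ?thesis using two_inner_edges_has_cycle finX less.prems(2) by fastforce
  next
    case False
    then obtain w where w: "w \<in> X" "\<not> two_inner_edges X w" by blast
    define a where "a = X - {w}"
    have X: "X = insert w a" and a: "a \<subseteq> V" "w \<in> V" "w \<notin> a"
      using less.prems w by (auto simp: a_def)
    define K where "K = {f\<in>E. w \<in> ends f \<and> ends f \<inter> a \<noteq> {}}"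
    have "K \<subseteq> {f\<in>E. w \<in> ends f \<and> ends f \<subseteq> X}"
    proof
      fix f assume f: "f \<in> K"
      then have "f \<in> E" by (simp add: K_def)
      then obtain p q where "p \<noteq> q" "ends f = {p, q}" using edge_endpoints by metis
      then show "f \<in> {f\<in>E. w \<in> ends f \<and> ends f \<subseteq> X}" using f X a(3) by (auto simp: K_def)
    qed
    then have "\<forall>f\<in>K. \<forall>g\<in>K. f = g"
      using w(2) unfolding two_inner_edges_def by blast
    then have K: "card K \<le> 1"
      using card_le_Suc0_iff_eq[of K] finite_E by (simp add: K_def)
    have eq: "card (boundary X) + 2 * card K = card (boundary a) + 3"
      using card_boundary_insert[OF a] degree_3[OF a(2)] X K_def by simp
    have ca: "card a = card X - 1" using a_def w finX by simp
    show ?thesis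
    proof (cases "card a \<ge> 2")
      case True
      have "has_cycle_in E ends a"
        using less.hyps[of a] ca less.prems True eq K a(1) by simp
      then show ?thesis unfolding has_cycle_in_def a_def by blast
    next
      case False
      then have "card a = 1" using ca less.prems by simp
      then obtain y where "a = {y}" by (auto simp: card_Suc_eq)
      then show ?thesis using eq K less.prems card_boundary_singleton_3 a by auto
    qed
  qed
qed

end

locale cyclically_4_connected_cubic_graph = cubic_graph +
  assumes cyclically_4: "cyclically_4_edge_connected V E ends"
begin

lemma cyclic_boundary_ge_4: "cyclic_partition V E ends X (V - X) \<Longrightarrow> card (boundary X) \<ge> 4"
  using cyclically_4 by (simp add: cyclically_4_edge_connected_def boundary_def)

text \<open>Any vertex set X with at least two vertices on each side has at least four boundary
  edges: otherwise both sides contain a cycle, giving a cyclic cut of size at most three.\<close>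
lemma boundary_ge_4:
  assumes "X \<subseteq> V" "card X \<ge> 2" "card (V - X) \<ge> 2"
  shows "card (boundary X) \<ge> 4"
proof (rule ccontr)
  assume "\<not> ?thesis"
  then have small: "card (boundary X) \<le> 3" "card (boundary (V - X)) \<le> 3"
    using boundary_complement[OF assms(1)] by simp_all
  have "cyclic_partition V E ends X (V - X)"
    using assms small_boundary_has_cycle[OF _ _ small(1)] small_boundary_has_cycle[OF _ _ small(2)]
    unfolding cyclic_partition_def by auto
  then show False using cyclic_boundary_ge_4 small(1) by fastforce
qed

lemma boundary_ge_3:
  assumes "Y \<subseteq> V" "Y \<noteq> {}" "card (V - Y) \<ge> 2"
  shows "card (boundary Y) \<ge> 3 \<and> (card (boundary Y) = 3 \<longrightarrow> (\<exists>w. Y = {w}))"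
proof (cases "card Y \<ge> 2")
  case True
  then show ?thesis using boundary_ge_4[OF assms(1) True assms(3)] by simp
next
  case False
  have "finite Y" using assms(1) finite_V finite_subset by blast
  moreover have "card Y \<noteq> 0" using \<open>finite Y\<close> assms(2) by simp
  ultimately have "card Y = 1" using False by linarith
  then obtain w where "Y = {w}" by (auto simp: card_Suc_eq)
  then show ?thesis using card_boundary_singleton_3 assms by auto
qed

text \<open>Each side of a cyclic partition has at least three vertices: a cycle on two vertices
  consists of two parallel edges, and then the side has only 3 + 3 - 4 = 2 boundary edges.\<close>
lemma cyclic_side_card_ge_3:
  assumes cp: "cyclic_partition V E ends A B"
  shows "card A \<ge> 3"
proof (rule ccontr)
  assume "\<not> ?thesis"
  then have cA: "card A \<le> 2" by simp
  have B: "B = V - A" and AV: "A \<subseteq> V" using cp by (auto simp: cyclic_partition_def)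
  have finA: "finite A" using AV finite_V finite_subset by blast
  obtain vs es where c: "length vs \<ge> 2" "length es = length vs" "distinct vs" "distinct es"
     "set vs \<subseteq> A" "set es \<subseteq> E" "\<forall>i<length vs. ends (es ! i) = {vs ! i, vs ! ((i + 1) mod length vs)}"
    using cp unfolding cyclic_partition_def has_cycle_in_def by blast
  have "length vs \<le> card A" using c card_mono[OF finA c(5)] by (simp add: distinct_card)
  then have l2: "length vs = 2" "card A = 2" using c cA by simp_all
  define p where "p = vs ! 0"
  define q where "q = vs ! 1"
  have pA: "p \<in> A" "q \<in> A" using c(5) l2 by (auto simp: p_def q_def)
  have pq: "p \<noteq> q" using c(3) l2 by (simp add: p_def q_def nth_eq_iff_index_eq)
  have pV: "p \<in> V" "q \<in> V" using pA AV by auto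
  have "{p, q} = A" using card_subset_eq[OF finA, of "{p, q}"] pA pq l2(2) by simp
  have "{es ! 0, es ! 1} \<subseteq> {f\<in>E. q \<in> ends f \<and> ends f \<inter> {p} \<noteq> {}}"
    using c(2,6,7) l2 by (auto simp: p_def q_def)
  moreover have "es ! 0 \<noteq> es ! 1" using c l2 by (simp add: nth_eq_iff_index_eq)
  ultimately have "2 \<le> card {f\<in>E. q \<in> ends f \<and> ends f \<inter> {p} \<noteq> {}}"
    using finite_E card_mono[of "{f\<in>E. q \<in> ends f \<and> ends f \<inter> {p} \<noteq> {}}" "{es ! 0, es ! 1}"]
    by auto
  moreover have "card (boundary (insert q {p})) + 2 * card {f\<in>E. q \<in> ends f \<and> ends f \<inter> {p} \<noteq> {}}
                 = card (boundary {p}) + 3"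
    using card_boundary_insert[of "{p}" q] degree_3 pV pq by auto
  ultimately have "card (boundary A) \<le> 2"
    using card_boundary_singleton_3[OF pV(1)] \<open>{p, q} = A\<close> by (simp add: insert_commute)
  then show False using cyclic_boundary_ge_4 cp B by fastforce
qed

text \<open>Otherwise A - C and C - A are single vertices w and x by posimodularity;
  submodularity then forces |boundary (A \<inter> C)| = 4, contradicting parity since |A| = |A \<inter> C| + 1.\<close>
lemma cyclic_4_cuts_nested:
  assumes e: "e \<in> E" "ends e = {u, v}" "u \<noteq> v"
    and A: "u \<in> A" "v \<notin> A" "cyclic_partition V E ends A (V - A)" "card (boundary A) = 4"
    and C: "u \<in> C" "v \<notin> C" "cyclic_partition V E ends C (V - C)" "card (boundary C) = 4"
  shows "A \<subseteq> C \<or> C \<subseteq> A"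
proof (rule ccontr)
  assume crossing: "\<not> ?thesis"
  have V: "A \<subseteq> V" "C \<subseteq> V" "u \<in> V" "v \<in> V" "finite V"
    using A(3) C(3) ends_subset[OF e(1)] e(2) finite_V by (auto simp: cyclic_partition_def)
  have two: "card Z \<ge> 2" if "u \<in> Z" "v \<in> Z" "Z \<subseteq> V" for Z
  proof -
    have "{u, v} \<subseteq> Z" using that by simp
    then show ?thesis using card_mono[of Z "{u, v}"] finite_subset[OF that(3) V(5)] e(3) by simp
  qed
  have sum: "card (boundary (A - C)) + card (boundary (C - A)) + 2 \<le> 8"
    using boundary_posimodular[OF e(1,2) A(1) C(1) A(2) C(2)] A(4) C(4) by simp
  have "A - C \<subseteq> V" "A - C \<noteq> {}" "card (V - (A - C)) \<ge> 2"
    using crossing V(1) two[of "V - (A - C)"] A(1,2) C(1,2) V(3,4) by auto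
  note AC = boundary_ge_3[OF this]
  have "C - A \<subseteq> V" "C - A \<noteq> {}" "card (V - (C - A)) \<ge> 2"
    using crossing V(2) two[of "V - (C - A)"] A(1,2) C(1,2) V(3,4) by auto
  note CA = boundary_ge_3[OF this]
  have "card (boundary (A - C)) = 3" "card (boundary (C - A)) = 3"
    using sum conjunct1[OF AC] conjunct1[OF CA] by linarith+
  then obtain w x where w: "A - C = {w}" and x: "C - A = {x}" using AC CA by blast
  define a where "a = A \<inter> C"
  define d where "d = V - (A \<union> C)"
  have A_eq: "A = insert w a" "w \<notin> a" and VA_eq: "V - A = insert x d" "x \<notin> d"
    using w x V(2) by (auto simp: a_def d_def)
  have sub: "a \<subseteq> V" "d \<subseteq> V" "w \<in> V" "x \<in> V" "w \<noteq> x"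
    using w x V(1,2) by (auto simp: a_def d_def)
  have fin: "finite a" "finite d" using sub(1,2) V(5) finite_subset by blast+
  have "{w, x} \<subseteq> V - a" "{w, x} \<subseteq> V - d" using sub w x by (auto simp: a_def d_def)
  then have outside: "card (V - a) \<ge> 2" "card (V - d) \<ge> 2"
    using card_mono[of "V - a" "{w, x}"] card_mono[of "V - d" "{w, x}"] V(5) sub(5) by simp_all
  have "card A \<ge> 3" using cyclic_side_card_ge_3[OF A(3)] .
  then have "card a \<ge> 2" using A_eq fin by simp
  then have a4: "card (boundary a) \<ge> 4" using boundary_ge_4 sub(1) outside(1) by blast
  have "cyclic_partition V E ends (V - A) A" using A(3) by (auto simp: cyclic_partition_def)
  then have "card (V - A) \<ge> 3" by (rule cyclic_side_card_ge_3)
  then have "card d \<ge> 2" using VA_eq fin by simp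
  then have d4: "card (boundary d) \<ge> 4" using boundary_ge_4 sub(2) outside(2) by blast
  have "boundary d = boundary (A \<union> C)"
    using boundary_complement[of "A \<union> C"] V(1,2) by (simp add: d_def)
  then have "card (boundary a) = 4"
    using boundary_submodular[of A C] A(4) C(4) a4 d4 by (simp add: a_def)
  then have "even (card a)" "even (card A)"
    using boundary_parity[OF sub(1)] boundary_parity[OF V(1)] A(4) by simp_all
  then show False using A_eq fin(1) by simp
qed

end

text \<open>A finite chain of sets can be enumerated increasingly as A 1 \<subseteq> ... \<subseteq> A k:
  by induction, listing the chain without its largest member (its union) first.\<close>
lemma finite_chain_enumeration:
  assumes "finite S" "\<forall>X\<in>S. \<forall>Y\<in>S. X \<subseteq> Y \<or> Y \<subseteq> X"
  shows "\<exists>(k::nat) (A :: nat \<Rightarrow> 'a set). (\<forall>i\<in>{1..k}. A i \<in> S) \<and>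
           (\<forall>i\<in>{1..<k}. A i \<subseteq> A (Suc i)) \<and> (\<forall>X\<in>S. \<exists>i\<in>{1..k}. X = A i)"
  using assms
proof (induction "card S" arbitrary: S)
  case 0
  then show ?case by (intro exI[of _ 0]) auto
next
  case (Suc n)
  define M where "M = \<Union>S"
  have "S \<noteq> {}" "subset.chain UNIV S"
    using Suc.hyps(2) Suc.prems(2) by (auto simp: subset.chain_def)
  then have M: "M \<in> S" using Union_in_chain[OF Suc.prems(1)] by (simp add: M_def)
  then have "n = card (S - {M})" using Suc.hyps(2) Suc.prems(1) by simp
  then obtain k A where A: "\<forall>i\<in>{1..k}. A i \<in> S - {M}" "\<forall>i\<in>{1..<k}. A i \<subseteq> A (Suc i)"
      "\<forall>X\<in>S - {M}. \<exists>i\<in>{1..k}. X = A i"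
    using Suc.hyps(1)[of "S - {M}"] Suc.prems by auto
  define A' where "A' = A(Suc k := M)"
  have "\<forall>i\<in>{1..Suc k}. A' i \<in> S" using A(1) M by (auto simp: A'_def)
  moreover have "\<forall>i\<in>{1..<Suc k}. A' i \<subseteq> A' (Suc i)"
    using A(1,2) by (auto simp: A'_def M_def less_Suc_eq)
  moreover have "\<forall>X\<in>S. \<exists>i\<in>{1..Suc k}. X = A' i"
  proof
    fix X assume "X \<in> S"
    show "\<exists>i\<in>{1..Suc k}. X = A' i"
    proof (cases "X = M")
      case True
      then show ?thesis by (intro bexI[of _ "Suc k"]) (simp_all add: A'_def)
    next
      case False
      then obtain i where "i \<in> {1..k}" "X = A i" using A(3) \<open>X \<in> S\<close> by blast
      then show ?thesis by (intro bexI[of _ i]) (simp_all add: A'_def)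
    qed
  qed
  ultimately show ?case by (intro exI[of _ "Suc k"] exI[of _ A'] conjI)
qed

theorem mainTheorem13:
  fixes V :: "'v set" and E :: "'e set" and ends :: "'e \<Rightarrow> 'v set" and e :: 'e
  assumes "cubic V E ends"
    and "cyclically_4_edge_connected V E ends"
    and "e \<in> E"
    and "\<exists>F. cyclic_k_edge_cut 4 V E ends F \<and> e \<in> F"
  shows "\<exists>(k::nat) (A :: nat \<Rightarrow> 'v set).
           (\<forall>i\<in>{1..k}. A i \<subseteq> V) \<and>
           (\<forall>i\<in>{1..<k}. A i \<subseteq> A (Suc i)) \<and>
           (\<forall>F. cyclic_k_edge_cut 4 V E ends F \<and> e \<in> F \<longrightarrow>
              (\<exists>i\<in>{1..k}. F = edge_cut E ends (A i) (V - A i)))"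
proof -
  interpret cyclically_4_connected_cubic_graph V E ends
    using assms(1,2) by unfold_locales (auto simp: cubic_def)
  obtain u v where uv: "u \<noteq> v" "ends e = {u, v}" using edge_endpoints[OF assms(3)] by metis
  define S where "S = {A. u \<in> A \<and> v \<notin> A \<and> cyclic_partition V E ends A (V - A) \<and>
                         card (boundary A) = 4}"
  have S_sub: "S \<subseteq> Pow V" by (auto simp: S_def cyclic_partition_def)
  have "finite S" using finite_subset[OF S_sub] finite_V by simp
  moreover have "\<forall>X\<in>S. \<forall>Y\<in>S. X \<subseteq> Y \<or> Y \<subseteq> X"
    using cyclic_4_cuts_nested[OF assms(3) uv(2,1)] by (simp add: S_def)
  ultimately obtain k A where A: "\<forall>i\<in>{1..k}. A i \<in> S" "\<forall>i\<in>{1..<k}. A i \<subseteq> A (Suc i)"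
      "\<forall>X\<in>S. \<exists>i\<in>{1..k}. X = A i"
    by (metis finite_chain_enumeration)
  have listed: "\<exists>i\<in>{1..k}. F = edge_cut E ends (A i) (V - A i)"
    if F: "cyclic_k_edge_cut 4 V E ends F" "e \<in> F" for F
  proof -
    obtain X where "X \<in> S" "F = boundary X"
      using cyclic_4_cut_side[OF F uv(2)] by (auto simp: S_def)
    then show ?thesis using A(3) by (auto simp: boundary_def)
  qed
  show ?thesis
  proof (intro exI[of _ k] exI[of _ A] conjI allI impI)
    show "\<forall>i\<in>{1..k}. A i \<subseteq> V" using A(1) S_sub by blast
  qed (use A(2) listed in simp_all)
qed

end
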